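(* Let $k\ge 1$ and consider a graph stream in which, at each time step $s$, a single new vertex $v_s$ (together with its incident edges) is added, so that the vertex sets satisfy $\mathcal{V}_{s+1}=\mathcal{V}_s\cup\{v_s\}$. Suppose that at some time $t$ the embedding matrix $\mathbf{F}_t\in\mathbb{R}^{|\mathcal{V}_t|\times k}$ is feasible for the round-$t$ optimization problem, i.e. $\mathbf{F}_t^{\top}\mathbf{F}_t=\mathbf{I}_{k\times k}$. For each $T\in\{0,1,2,\dots\}$, let $\mathbf{F}_{t+T+1}$ be obtained from $\mathbf{F}_{t+T}$ by the update procedure described below, where $s=t+T$ and $\mathcal{I}_{s+1}(v_s)$ is the set of influenced vertices at that step. Then for every $t'>t$, the matrix $\mathbf{F}_{t'}$ is feasible for the round-$t'$ problem, i.e. $\mathbf{F}_{t'}^{\top}\mathbf{F}_{t'}=\mathbf{I}_{k\times k}$.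
   Context: Embeddings: at time $s$, $\mathbf{F}_s\in\mathbb{R}^{|\mathcal{V}_s|\times k}$ has one row $(\mathbf{f}^{(s)}_u)^{\top}$ for each vertex $u\in\mathcal{V}_s$. The round-$s$ optimization problem minimizes a loss over $\mathbf{F}_s$ subject to the orthogonality constraint $\mathbf{F}_s^{\top}\mathbf{F}_s=\mathbf{I}_{k\times k}$. A matrix is feasible for this problem exactly when it satisfies this constraint. Influenced set: at each step, when the new vertex $v_s$ arrives, a set $\mathcal{I}_{s+1}(v_s)$ of already-arrived vertices "influenced" by $v_s$ is selected. The selection may be random, for example by an independent-cascade process started at $v_s$, run to a depth $D$, in which a vertex $v$ influences a neighbor $u$ with probability $1/(\text{in-degree of } u)$. This set is a nonempty subset of $\mathcal{V}_s$. Update procedure (going from $\mathbf{F}_s$ to $\mathbf{F}_{s+1}$): write $\mathcal{I}=\mathcal{I}_{s+1}(v_s)$. - The new vertex gets the average of the influenced embeddings: $\mathbf{f}^{(s+1)}_{v_s}=\frac{1}{|\mathcal{I}|}\sum_{u\in\mathcal{I}}\mathbf{f}^{(s)}_u$. - Set $\alpha_{s+1}=1-\sqrt{1-\frac{1}{|\mathcal{I}|}}$. - For each $u\in\mathcal{V}_s$: if $u\in\mathcal{I}$, then $\mathbf{f}^{(s+1)}_u=\mathbf{f}^{(s)}_u-\alpha_{s+1}\mathbf{f}^{(s+1)}_{v_s}$; otherwise $\mathbf{f}^{(s+1)}_u=\mathbf{f}^{(s)}_u$. - $\mathbf{F}_{s+1}\in\mathbb{R}^{|\mathcal{V}_{s+1}|\times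 k}$ is the matrix whose rows are $\mathbf{f}^{(s+1)}_u$ for $u\in\mathcal{V}_{s+1}$. *)

theory Defs
  imports Complex_Main
begin

text \<open>An embedding at a given time is a function assigning to each vertex u a row
  vector f_u, represented as nat => real with coordinates 0..k-1.  The matrix F_s
  has rows f_u for u in the vertex set V_s.\<close>

definition feasible :: "'v set \<Rightarrow> nat \<Rightarrow> ('v \<Rightarrow> nat \<Rightarrow> real) \<Rightarrow> bool" where
  "feasible V k F \<longleftrightarrow>
     (\<forall>i<k. \<forall>j<k. (\<Sum>u\<in>V. F u i * F u j) = (if i = j then 1 else 0))"

definition update_step ::
  "'v set \<Rightarrow> 'v \<Rightarrow> ('v \<Rightarrow> nat \<Rightarrow> real) \<Rightarrow> ('v \<Rightarrow> nat \<Rightarrow> real)" where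
  "update_step I v F =
    (let w = (\<lambda>j. (\<Sum>u\<in>I. F u j) / real (card I));
         a = 1 - sqrt (1 - 1 / real (card I))
     in (\<lambda>x j. if x = v then w j
               else if x \<in> I then F x j - a * w j
               else F x j))"

end

theory Submission
  imports Defs
begin

text \<open>Write \<open>n = |I|\<close> and \<open>w\<close> for the mean of the influenced rows. Moving the rows in \<open>I\<close>
  by \<open>-\<alpha> w\<close> and appending the row \<open>w\<close> changes each inner product of two columns \<open>i, j\<close>
  by \<open>w\<^sub>i w\<^sub>j (1 - 2 \<alpha> n + n \<alpha>\<^sup>2)\<close>, and \<open>\<alpha> = 1 - sqrt (1 - 1/n)\<close> is exactly a root of
  this quadratic. Hence each update preserves the Gram matrix \<open>F\<^sup>T F\<close>, in particular
  the constraint \<open>F\<^sup>T F = I\<close>, and feasibility propagates by induction on time.\<close>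

lemma update_coefficient_root:
  fixes n :: real
  assumes "n \<ge> 1"
  shows "1 - 2 * (1 - sqrt (1 - 1 / n)) * n + n * (1 - sqrt (1 - 1 / n))\<^sup>2 = 0"
proof -
  have "(sqrt (1 - 1 / n))\<^sup>2 = 1 - 1 / n"
    using assms by simp
  then show ?thesis
    using assms by (simp add: power2_eq_square field_simps)
qed

lemma sum_shifted_products:
  fixes f g :: "'a \<Rightarrow> real"
  shows "(\<Sum>u\<in>I. (f u - c * x) * (g u - c * y)) =
    (\<Sum>u\<in>I. f u * g u) - c * y * (\<Sum>u\<in>I. f u) - c * x * (\<Sum>u\<in>I. g u)
      + real (card I) * c\<^sup>2 * x * y"
  by (simp add: algebra_simps power2_eq_square sum.distrib sum_subtractf sum_distrib_left)

lemma update_step_column_products: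
  assumes fin: "finite V" and new: "v \<notin> V" and nonempty: "I \<noteq> {}" and sub: "I \<subseteq> V"
  shows "(\<Sum>u\<in>insert v V. update_step I v F u i * update_step I v F u j)
    = (\<Sum>u\<in>V. F u i * F u j)"
proof -
  define n where "n = real (card I)"
  define w where "w = (\<lambda>j. (\<Sum>u\<in>I. F u j) / n)"
  define a where "a = 1 - sqrt (1 - 1 / n)"
  let ?G = "update_step I v F"
  have "finite I"
    using fin sub finite_subset by blast
  then have n_ge_1: "n \<ge> 1"
    using nonempty by (simp add: n_def Suc_le_eq card_gt_0_iff)
  have G: "?G = (\<lambda>x j. if x = v then w j else if x \<in> I then F x j - a * w j else F x j)"
    unfolding update_step_def w_def a_def n_def Let_def by simp
  have sum_I: "(\<Sum>u\<in>I. F u j) = n * w j" for j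
    using n_ge_1 by (simp add: w_def)
  have split_V: "(\<Sum>u\<in>V. g u) = (\<Sum>u\<in>I. g u) + (\<Sum>u\<in>V - I. g u)" for g :: "'a \<Rightarrow> real"
    using sum.subset_diff[OF sub fin] by (simp add: add.commute)
  have "v \<notin> I"
    using new sub by blast
  then have "(\<Sum>u\<in>I. ?G u i * ?G u j) = (\<Sum>u\<in>I. (F u i - a * w i) * (F u j - a * w j))"
    by (intro sum.cong) (auto simp: G)
  also have "\<dots> = (\<Sum>u\<in>I. F u i * F u j) - w i * w j * (2 * a * n - n * a\<^sup>2)"
    unfolding sum_shifted_products sum_I n_def[symmetric] by (simp add: algebra_simps)
  finally have on_I: "(\<Sum>u\<in>I. ?G u i * ?G u j)
      = (\<Sum>u\<in>I. F u i * F u j) - w i * w j * (2 * a * n - n * a\<^sup>2)" .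
  have off_I: "(\<Sum>u\<in>V - I. ?G u i * ?G u j) = (\<Sum>u\<in>V - I. F u i * F u j)"
    using new by (intro sum.cong) (auto simp: G)
  have "(\<Sum>u\<in>insert v V. ?G u i * ?G u j) = w i * w j + (\<Sum>u\<in>V. ?G u i * ?G u j)"
    using fin new by (simp add: G)
  also have "\<dots> = (\<Sum>u\<in>V. F u i * F u j) + w i * w j * (1 - 2 * a * n + n * a\<^sup>2)"
    unfolding split_V[of "\<lambda>u. ?G u i * ?G u j"] split_V[of "\<lambda>u. F u i * F u j"] on_I off_I
    by (simp add: algebra_simps)
  also have "1 - 2 * a * n + n * a\<^sup>2 = 0"
    unfolding a_def using update_coefficient_root[OF n_ge_1] .
  finally show ?thesis
    by simp
qed

lemma feasible_update_step:
  assumes "finite V" "v \<notin> V" "I \<noteq> {}" "I \<subseteq> V" "feasible V k F"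
  shows "feasible (insert v V) k (update_step I v F)"
  using assms update_step_column_products[of V v I F] by (simp add: feasible_def)

theorem lemma1:
  fixes k :: nat and t :: nat
    and V :: "nat \<Rightarrow> 'v set" and v :: "nat \<Rightarrow> 'v"
    and I :: "nat \<Rightarrow> 'v set" and F :: "nat \<Rightarrow> 'v \<Rightarrow> nat \<Rightarrow> real"
  assumes "k \<ge> 1"
    and "finite (V t)"
    and "\<And>s. s \<ge> t \<Longrightarrow> v s \<notin> V s"
    and "\<And>s. s \<ge> t \<Longrightarrow> V (Suc s) = insert (v s) (V s)"
    and "\<And>s. s \<ge> t \<Longrightarrow> I s \<noteq> {} \<and> I s \<subseteq> V s"
    and "\<And>s. s \<ge> t \<Longrightarrow> F (Suc s) = update_step (I s) (v s) (F s)"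
    and "feasible (V t) k (F t)"
  shows "\<forall>t' > t. feasible (V t') k (F t')"
proof -
  have "finite (V (t + d)) \<and> feasible (V (t + d)) k (F (t + d))" for d
  proof (induction d)
    case 0
    then show ?case
      using assms(2,7) by simp
  next
    case (Suc d)
    then show ?case
      using feasible_update_step[of "V (t + d)" "v (t + d)" "I (t + d)" k "F (t + d)"] assms(3-6)
      by simp
  qed
  then show ?thesis
    by (metis less_imp_add_positive)
qed

end
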